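(* Let $\mu$ be a finite nonnegative measure and $P,Q$ probability measures on $\mathcal{X}$ (with $\mu\ll Q$, $P\ll Q$), $X\sim P$, $\epsilon\in(0,1)$, $\gamma\ge1$. (a) For every $a>1$: $E_\gamma(P\|Q)\le\bar F_\gamma(P\|Q)\le\frac{a}{a-1}E_{\gamma/a}(P\|Q)$. (b) $D(P\|Q)\le\int_0^\infty\mathbb{P}[\imath_{P\|Q}(X)>\tau]\,d\tau$ and $D(P\|Q)\ge E_\gamma(P\|Q)\log\gamma-2e^{-1}\log e$. (c) If $\alpha\in[0,1)$ then $D_\alpha(\mu\|Q)\le\log\gamma-\frac{1}{1-\alpha}\log\big(\mu(\mathcal{X})-E_\gamma(\mu\|Q)\big)$; if $\alpha\in(1,\infty)$ then $D_\alpha(\mu\|Q)\ge\log\gamma+\frac1{\alpha-1}\log E_\gamma(\mu\|Q)$. (d) If $\alpha\in[0,1)$ and $E_\gamma(P\|Q)<1-\epsilon$ then $D_\alpha^{+\epsilon}(P\|Q)\le\log\gamma-\frac1{1-\alpha}\log(1-\epsilon-E_\gamma(P\|Q))$; if $\alpha\in(1,\infty]$ and $E_\gamma(P\|Q)>\epsilon$ then $D_\alpha^{-\epsilon}(P\|Q)\ge\log\gamma+\frac1{\alpha-1}\log(E_\gamma(P\|Q)-\epsilon)$. (e) $D_\infty^{-\epsilon}(P\|Q)\le\log\gamma$ if and only if $E_\gamma(P\|Q)\le\epsilon$; equivalently $D_\infty^{-\epsilon}(P\|Q)=\log\inf\{\gamma: E_\gamma(P\|Q)\le\epsilon\}$.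 (f) $D_0^{+\epsilon}(P\|Q)=-\log\beta_{1-\epsilon}(P,Q)$. (g) Let $\tau\in\mathbb{R}$ with $\epsilon\ge\mathbb{P}[\imath_{P\|Q}(X)\le\tau]$. Then $D_0^{+\epsilon}(P\|Q)\ge\tau$, and if moreover $P$ is non-atomic, $D_0^{+\epsilon}(P\|Q)\ge\tau+\log\frac1{1-\epsilon}$.
   Context: For nonnegative finite measures $\mu\ll\nu$ and $\gamma\ge1$ (and also for $\gamma>0$ by the same formula): $E_\gamma(\mu\|\nu):=\sup_{\mathcal{A}}\{\mu(\mathcal{A})-\gamma\nu(\mathcal{A})\}$. $\imath_{P\|Q}=\log\frac{dP}{dQ}$, $\bar F_\gamma(P\|Q)=\mathbb{P}[\imath_{P\|Q}(X)>\log\gamma]$ with $X\sim P$, and $D(P\|Q)=\mathbb{E}[\imath_{P\|Q}(X)]$. Rényi divergence of a nonnegative finite measure $\mu\ll Q$ w.r.t. probability $Q$: for $\alpha\in(0,1)\cup(1,\infty)$, $D_\alpha(\mu\|Q)=\frac1{\alpha-1}\log\mathbb{E}[(\frac{d\mu}{dQ}(Y))^\alpha]$, $Y\sim Q$; $D_0(\mu\|Q)=\log\frac1{Q(\imath_{\mu\|Q}>-\infty)}$; $D_\infty(\mu\|Q)=\mu$-$\operatorname{ess\,sup}\imath_{\mu\|Q}$. With $B^\epsilon(P):=\{\mu\text{ nonnegative}: E_1(P\|\mu)\le\epsilon\}$: for $\alpha\in[0,1)$, $D_\alpha^{+\epsilon}(P\|Q):=\sup_{\mu\in B^\epsilon(P)}D_\alpha(\mu\|Q)$;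 for $\alpha\in(1,\infty]$, $D_\alpha^{-\epsilon}(P\|Q):=\inf_{\mu\in B^\epsilon(P)}D_\alpha(\mu\|Q)$. For nonnegative finite measures, $\beta_\alpha(\mu,\nu):=\min_{\mathcal{A}:\mu(\mathcal{A})\ge\alpha}\nu(\mathcal{A})$ (deterministic tests only). *)

theory Defs
  imports "HOL-Probability.Probability"
begin

text \<open>Logarithms are to an arbitrary base b > 1 (the paper leaves the base unspecified,
  hence the term log e).  elog extends log to [0,\<infinity>] with log 0 = -\<infinity>, log \<infinity> = \<infinity>.\<close>
definition elog :: "real \<Rightarrow> ennreal \<Rightarrow> ereal" where
  "elog b x = (if x = 0 then - \<infinity> else if x = \<top> then \<infinity> else ereal (log b (enn2real x)))"

definition Egamma :: "real \<Rightarrow> 'a measure \<Rightarrow> 'a measure \<Rightarrow> real" where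
  "Egamma \<gamma> \<mu> \<nu> = Sup ((\<lambda>A. measure \<mu> A - \<gamma> * measure \<nu> A) ` sets \<mu>)"

definition info_dens :: "real \<Rightarrow> 'a measure \<Rightarrow> 'a measure \<Rightarrow> 'a \<Rightarrow> ereal" where
  "info_dens b P Q x = elog b (RN_deriv Q P x)"

definition Fbar :: "real \<Rightarrow> real \<Rightarrow> 'a measure \<Rightarrow> 'a measure \<Rightarrow> real" where
  "Fbar b \<gamma> P Q = measure P {x \<in> space P. info_dens b P Q x > ereal (log b \<gamma>)}"

definition relent :: "real \<Rightarrow> 'a measure \<Rightarrow> 'a measure \<Rightarrow> ereal" where
  "relent b P Q =
     enn2ereal (\<integral>\<^sup>+ x. e2ennreal (max 0 (info_dens b P Q x)) \<partial>P)
   - enn2ereal (\<integral>\<^sup>+ x. e2ennreal (max 0 (- info_dens b P Q x)) \<partial>P)"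

text \<open>Renyi divergence D_alpha(mu||Q) of a finite measure mu << Q w.r.t. a probability Q,
  for alpha in [0,1) \<union> (1,\<infinity>]; the value at alpha = 1 is irrelevant.\<close>
definition renyi :: "real \<Rightarrow> ereal \<Rightarrow> 'a measure \<Rightarrow> 'a measure \<Rightarrow> ereal" where
  "renyi b \<alpha> \<mu> Q =
    (if \<alpha> = \<infinity> then esssup \<mu> (\<lambda>x. elog b (RN_deriv Q \<mu> x))
     else if \<alpha> = 0 then elog b (1 / emeasure Q {y \<in> space Q. elog b (RN_deriv Q \<mu> y) > - \<infinity>})
     else ereal (1 / (real_of_ereal \<alpha> - 1)) *
       elog b (\<integral>\<^sup>+ y. ennreal (enn2real (RN_deriv Q \<mu> y) powr real_of_ereal \<alpha>) \<partial>Q))"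

text \<open>The ball B^eps(P): finite nonnegative measures mu on the same measurable space,
  with mu << Q (so that D_alpha(mu||Q) is defined), and E_1(P||mu) \<le> eps.\<close>
definition Bball :: "real \<Rightarrow> 'a measure \<Rightarrow> 'a measure \<Rightarrow> 'a measure set" where
  "Bball \<epsilon> P Q = {\<mu>. sets \<mu> = sets P \<and> finite_measure \<mu> \<and> absolutely_continuous Q \<mu>
                      \<and> Egamma 1 P \<mu> \<le> \<epsilon>}"

definition renyi_plus :: "real \<Rightarrow> ereal \<Rightarrow> real \<Rightarrow> 'a measure \<Rightarrow> 'a measure \<Rightarrow> ereal" where
  "renyi_plus b \<alpha> \<epsilon> P Q = (SUP \<mu>\<in>Bball \<epsilon> P Q. renyi b \<alpha> \<mu> Q)"

definition renyi_minus :: "real \<Rightarrow> ereal \<Rightarrow> real \<Rightarrow> 'a measure \<Rightarrow> 'a measure \<Rightarrow> ereal" where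
  "renyi_minus b \<alpha> \<epsilon> P Q = (INF \<mu>\<in>Bball \<epsilon> P Q. renyi b \<alpha> \<mu> Q)"

text \<open>beta_alpha(mu,nu) = min over events A with mu(A) \<ge> alpha of nu(A) (deterministic tests),
  written as an infimum.\<close>
definition beta_NP :: "real \<Rightarrow> 'a measure \<Rightarrow> 'a measure \<Rightarrow> real" where
  "beta_NP \<alpha> \<mu> \<nu> = Inf {measure \<nu> A | A. A \<in> sets \<mu> \<and> measure \<mu> A \<ge> \<alpha>}"

definition nonatomic :: "'a measure \<Rightarrow> bool" where
  "nonatomic M \<longleftrightarrow> (\<forall>A\<in>sets M. emeasure M A > 0 \<longrightarrow>
       (\<exists>B\<in>sets M. B \<subseteq> A \<and> 0 < emeasure M B \<and> emeasure M B < emeasure M A))"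

end

theory Submission
  imports Defs
begin

text \<open>
  Everything is governed by the likelihood-ratio sets S_\<gamma> = {d\<mu>/dQ > \<gamma>}. By the
  Neyman-Pearson argument they attain the supremum defining E_\<gamma>, so that
  E_\<gamma>(\<mu>||Q) = \<mu>(S_\<gamma>) - \<gamma> Q(S_\<gamma>) and \<mu>(X) - E_\<gamma>(\<mu>||Q) = \<integral> min(d\<mu>/dQ, \<gamma>) dQ.
  The R\<acute>enyi bounds (c) come from integrating the pointwise inequalities
  r^\<alpha> \<ge> \<gamma>^(\<alpha>-1) min(r, \<gamma>) for \<alpha> \<le> 1 and r^\<alpha> \<ge> \<gamma>^(\<alpha>-1) r for r > \<gamma>, \<alpha> \<ge> 1;
  they pass to the smoothed divergences (d) because on the ball B^\<epsilon>(P) the quantities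
  E_\<gamma>(\<mu>||Q) and \<mu>(X) - E_\<gamma>(\<mu>||Q) move by at most \<epsilon>.
  The ball contains the measure with density min(dP/dQ, g), whose D_\<infinity> is at most log g
  precisely when E_g(P||Q) \<le> \<epsilon>, which gives (e); and it contains the restriction of P to
  any set of probability at least 1 - \<epsilon>, which gives (f) and (g). In the nonatomic case
  such a set is first cut down to probability exactly 1 - \<epsilon> (Sierpi\<acute>nski).
  For (b), the layer-cake formula bounds the positive part of D(P||Q), while its negative part
  is at most e^-1 log e since -x log x \<le> e^-1 log e.
\<close>

lemma elog_ennreal: "r > 0 \<Longrightarrow> elog b (ennreal r) = ereal (log b r)"
  by (simp add: elog_def)

lemma elog_ennreal_nonpos: "r \<le> 0 \<Longrightarrow> elog b (ennreal r) = - \<infinity>"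
  by (simp add: elog_def ennreal_eq_0_iff)

lemma elog_eq_minf_iff: "elog b x = - \<infinity> \<longleftrightarrow> x = 0"
  by (simp add: elog_def)

lemma elog_one_div_ennreal: "q > 0 \<Longrightarrow> elog b (1 / ennreal q) = ereal (log b (1 / q))"
  using divide_ennreal[of 1 q] by (simp add: elog_ennreal)

lemma ennreal_one_divide_antimono:
  fixes x y :: ennreal
  assumes "x \<le> y"
  shows "1 / y \<le> 1 / x"
proof (cases "x = 0 \<or> y = \<top>")
  case False
  then obtain r s where "x = ennreal r" "y = ennreal s" "0 < r" "r \<le> s"
    using assms by (cases x rule: ennreal_cases; cases y rule: ennreal_cases) (auto simp: top_unique)
  then show ?thesis
    using divide_ennreal[of 1 r] divide_ennreal[of 1 s] by (simp add: ennreal_leI frac_le)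
qed auto

lemma elog_mono:
  assumes b: "b > 1" and le: "x \<le> y"
  shows "elog b x \<le> elog b y"
proof (cases "x = 0 \<or> y = \<top>")
  case False
  then have "x \<noteq> \<top>" "y \<noteq> 0"
    using le by (auto simp: top_unique)
  moreover have "0 < enn2real x" "enn2real x \<le> enn2real y"
    using False le \<open>x \<noteq> \<top>\<close>
    by (auto simp: enn2real_positive_iff top.not_eq_extremum zero_less_iff_neq_zero enn2real_mono)
  ultimately show ?thesis
    using False b by (simp add: elog_def)
qed (auto simp: elog_def)

lemma log_less_elog_iff:
  assumes b: "b > 1" and g: "g > 0"
  shows "ereal (log b g) < elog b x \<longleftrightarrow> ennreal g < x"
proof (cases x rule: ennreal_cases)
  case (real r)
  then show ?thesis
    using b g by (cases "r > 0") (auto simp: elog_def ennreal_less_iff ennreal_eq_0_iff)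
qed (auto simp: elog_def)

lemma elog_le_log_iff:
  assumes "b > 1" "g > 0"
  shows "elog b x \<le> ereal (log b g) \<longleftrightarrow> x \<le> ennreal g"
  using log_less_elog_iff[OF assms, of x] by (simp add: not_less[symmetric])

lemma measurable_elog [measurable]:
  assumes [measurable]: "f \<in> borel_measurable M"
  shows "(\<lambda>x. elog b (f x)) \<in> borel_measurable M"
  unfolding elog_def by measurable

text \<open>A lower bound on the moment I = \<integral> (d\<mu>/dQ)^\<alpha> dQ bounds (log I)/(\<alpha> - 1) from above or
  from below according to the sign of \<alpha> - 1.\<close>

lemma scaled_elog_le:
  assumes b: "b > 1" and pos: "\<gamma> > 0" "K > 0" and \<alpha>: "\<alpha> < 1"
    and I: "ennreal (\<gamma> powr (\<alpha> - 1) * K) \<le> I"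
  shows "ereal (1 / (\<alpha> - 1)) * elog b I \<le> ereal (log b \<gamma> - 1 / (1 - \<alpha>) * log b K)"
proof -
  have "ereal (log b (\<gamma> powr (\<alpha> - 1) * K)) \<le> elog b I"
    using elog_mono[OF b I] pos by (simp add: elog_ennreal)
  then have "ereal (1 / (\<alpha> - 1)) * elog b I \<le> ereal (1 / (\<alpha> - 1) * log b (\<gamma> powr (\<alpha> - 1) * K))"
    using \<alpha> by (cases "elog b I") (auto intro: divide_right_mono_neg)
  also have "1 / (\<alpha> - 1) * log b (\<gamma> powr (\<alpha> - 1) * K) = log b \<gamma> - 1 / (1 - \<alpha>) * log b K"
    using pos \<alpha> b by (simp add: log_mult log_powr field_simps)
  finally show ?thesis .
qed

lemma scaled_elog_ge:
  assumes b: "b > 1" and pos: "\<gamma> > 0" "K > 0" and \<alpha>: "\<alpha> > 1"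
    and I: "ennreal (\<gamma> powr (\<alpha> - 1) * K) \<le> I"
  shows "ereal (log b \<gamma> + 1 / (\<alpha> - 1) * log b K) \<le> ereal (1 / (\<alpha> - 1)) * elog b I"
proof -
  have "ereal (log b (\<gamma> powr (\<alpha> - 1) * K)) \<le> elog b I"
    using elog_mono[OF b I] pos by (simp add: elog_ennreal)
  then have "ereal (1 / (\<alpha> - 1) * log b (\<gamma> powr (\<alpha> - 1) * K)) \<le> ereal (1 / (\<alpha> - 1)) * elog b I"
    using \<alpha> by (cases "elog b I") (auto intro: divide_right_mono)
  moreover have "1 / (\<alpha> - 1) * log b (\<gamma> powr (\<alpha> - 1) * K) = log b \<gamma> + 1 / (\<alpha> - 1) * log b K"
    using pos \<alpha> b by (simp add: log_mult log_powr field_simps)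
  ultimately show ?thesis by simp
qed

lemma powr_ge_scaled_min:
  fixes \<gamma> r \<alpha> :: real
  assumes "0 < \<gamma>" "0 \<le> r" "0 \<le> \<alpha>" "\<alpha> \<le> 1"
  shows "\<gamma> powr (\<alpha> - 1) * min r \<gamma> \<le> r powr \<alpha>"
proof (cases "r \<le> \<gamma>")
  case True
  show ?thesis
  proof (cases "r = 0")
    case False
    then have "\<gamma> powr (\<alpha> - 1) * r \<le> r powr (\<alpha> - 1) * r"
      using assms True by (intro mult_right_mono powr_mono2') auto
    then show ?thesis
      using True False assms by (simp add: powr_add[of r "\<alpha> - 1" 1, simplified])
  qed (use assms in simp)
next
  case False
  then have "\<gamma> powr \<alpha> \<le> r powr \<alpha>"
    using assms by (intro powr_mono2) auto
  then show ?thesis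
    using False assms by (simp add: powr_add[of \<gamma> "\<alpha> - 1" 1, simplified])
qed

lemma powr_ge_scaled:
  fixes \<gamma> r \<alpha> :: real
  assumes "0 < \<gamma>" "\<gamma> \<le> r" "1 \<le> \<alpha>"
  shows "\<gamma> powr (\<alpha> - 1) * r \<le> r powr \<alpha>"
proof -
  have "\<gamma> powr (\<alpha> - 1) * r \<le> r powr (\<alpha> - 1) * r"
    using assms by (intro mult_right_mono powr_mono2) auto
  then show ?thesis
    using assms by (simp add: powr_add[of r "\<alpha> - 1" 1, simplified])
qed

lemma neg_mult_log_le:
  assumes b: "b > 1" and r: "0 < r"
  shows "r * (- log b r) \<le> exp (-1) * log b (exp 1)"
proof -
  have "ln (exp (-1) / r) \<le> exp (-1) / r - 1"
    using r by (intro ln_le_minus_one) auto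
  then have "r * (- ln r) \<le> exp (-1)"
    using r by (simp add: ln_div field_simps)
  then have "r * (- ln r) / ln b \<le> exp (-1) / ln b"
    using b by (intro divide_right_mono) auto
  then show ?thesis by (simp add: log_def)
qed

lemma ennreal_less_e2ennreal_max_iff:
  assumes "0 \<le> \<tau>"
  shows "ennreal \<tau> < e2ennreal (max 0 y) \<longleftrightarrow> ereal \<tau> < y"
proof (cases y)
  case (real r)
  with assms show ?thesis
    by (cases "r \<ge> 0") (auto simp: max_def ennreal_less_iff)
qed (use assms in auto)

lemma emeasure_lborel_atLeast_0: "emeasure lborel {0::real..} = \<infinity>"
proof -
  have "of_nat n \<le> emeasure lborel {0::real..}" for n
  proof -
    have "emeasure lborel {0::real..<real n} \<le> emeasure lborel {0::real..}"
      by (intro emeasure_mono) auto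
    then show ?thesis by (simp add: ennreal_of_nat_eq_real_of_nat)
  qed
  then have "(SUP n. of_nat n :: ennreal) \<le> emeasure lborel {0::real..}"
    by (intro SUP_least) simp
  then show ?thesis
    by (simp add: ennreal_SUP_of_nat_eq_top top_unique)
qed

lemma nn_integral_lborel_below:
  "(\<integral>\<^sup>+ \<tau>. indicator {\<tau>. 0 \<le> \<tau> \<and> ennreal \<tau> < c} \<tau> \<partial>lborel) = c"
proof (cases c rule: ennreal_cases)
  case (real r)
  then have "{\<tau>. 0 \<le> \<tau> \<and> ennreal \<tau> < c} = {0..<r}"
    by (auto simp: ennreal_less_iff)
  with real show ?thesis by simp
next
  case top
  then have "{\<tau>. 0 \<le> \<tau> \<and> ennreal \<tau> < c} = {0..}"
    by auto
  with top show ?thesis by (simp add: emeasure_lborel_atLeast_0)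
qed

lemma nn_integral_layer_cake:
  assumes f[measurable]: "f \<in> borel_measurable M" and "sigma_finite_measure M"
  shows "(\<integral>\<^sup>+ x. f x \<partial>M) = (\<integral>\<^sup>+ \<tau>\<in>{0..}. emeasure M {x \<in> space M. ennreal \<tau> < f x} \<partial>lborel)"
proof -
  interpret sigma_finite_measure M by fact
  interpret pair_sigma_finite M lborel ..
  have "(\<integral>\<^sup>+ x. f x \<partial>M) = (\<integral>\<^sup>+ x. (\<integral>\<^sup>+ \<tau>. indicator {\<tau>. 0 \<le> \<tau> \<and> ennreal \<tau> < f x} \<tau> \<partial>lborel) \<partial>M)"
    by (simp add: nn_integral_lborel_below)
  also have "\<dots> = (\<integral>\<^sup>+ \<tau>. (\<integral>\<^sup>+ x. indicator {\<tau>. 0 \<le> \<tau> \<and> ennreal \<tau> < f x} \<tau> \<partial>M) \<partial>lborel)"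
    by (rule Fubini'[symmetric]) measurable
  also have "\<dots> = (\<integral>\<^sup>+ \<tau>\<in>{0..}. emeasure M {x \<in> space M. ennreal \<tau> < f x} \<partial>lborel)"
  proof (rule nn_integral_cong)
    fix \<tau> :: real
    have "(\<integral>\<^sup>+ x. indicator {\<tau>. 0 \<le> \<tau> \<and> ennreal \<tau> < f x} \<tau> \<partial>M)
        = (\<integral>\<^sup>+ x. indicator {0..} \<tau> * indicator {x \<in> space M. ennreal \<tau> < f x} x \<partial>M)"
      by (intro nn_integral_cong) (auto simp: indicator_def)
    then show "(\<integral>\<^sup>+ x. indicator {\<tau>. 0 \<le> \<tau> \<and> ennreal \<tau> < f x} \<tau> \<partial>M)
        = emeasure M {x \<in> space M. ennreal \<tau> < f x} * indicator {0..} \<tau>"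
      by (simp add: nn_integral_cmult mult.commute)
  qed
  finally show ?thesis .
qed

subsection \<open>Nonatomic measures\<close>

lemma nonpos_if_multiples_bounded:
  fixes x r :: real
  assumes "\<And>n. real n * x \<le> r"
  shows "x \<le> 0"
proof (rule ccontr)
  assume "\<not> x \<le> 0"
  then obtain n where "r < real n * x"
    using reals_Archimedean3[of x] by auto
  with assms[of n] show False
    by simp
qed

context finite_measure
begin

lemma nonatomic_half_subset:
  assumes "nonatomic M" and F: "F \<in> sets M" "0 < measure M F"
  shows "\<exists>G\<in>sets M. G \<subseteq> F \<and> 0 < measure M G \<and> measure M G \<le> measure M F / 2"
proof -
  obtain G where G: "G \<in> sets M" "G \<subseteq> F" "0 < emeasure M G" "emeasure M G < emeasure M F"
    using assms unfolding nonatomic_def by (auto simp: emeasure_eq_measure)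
  then have "0 < measure M G" "measure M G < measure M F"
    by (simp_all add: emeasure_eq_measure ennreal_less_iff)
  moreover have "measure M (F - G) = measure M F - measure M G"
    using finite_measure_Diff[OF F(1) G(1,2)] .
  ultimately show ?thesis
  proof (cases "measure M G \<le> measure M F / 2")
    case False
    with \<open>measure M (F - G) = _\<close> \<open>measure M G < _\<close> G F show ?thesis
      by (intro bexI[of _ "F - G"]) auto
  qed (use G in blast)
qed

lemma nonatomic_small_subset:
  assumes na: "nonatomic M" and A: "A \<in> sets M" "0 < measure M A" and e: "0 < e"
  shows "\<exists>F\<in>sets M. F \<subseteq> A \<and> 0 < measure M F \<and> measure M F \<le> e"
proof -
  have halving: "\<exists>F\<in>sets M. F \<subseteq> A \<and> 0 < measure M F \<and> measure M F \<le> measure M A / 2 ^ n" for n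
  proof (induction n)
    case (Suc n)
    then obtain F where F: "F \<in> sets M" "F \<subseteq> A" "0 < measure M F" "measure M F \<le> measure M A / 2 ^ n"
      by blast
    then obtain G where "G \<in> sets M" "G \<subseteq> F" "0 < measure M G" "measure M G \<le> measure M F / 2"
      using nonatomic_half_subset[OF na] by blast
    moreover have "measure M F / 2 \<le> measure M A / 2 ^ Suc n"
      using F(4) by simp
    ultimately show ?case
      using F(2) by (intro bexI[of _ G]) auto
  qed (use A in auto)
  obtain n where "(1/2::real) ^ n < e / measure M A"
    using real_arch_pow_inv[of "e / measure M A" "1/2"] e A by auto
  then have "measure M A / 2 ^ n < e"
    using A by (simp add: field_simps power_one_over)
  with halving[of n] show ?thesis
    by (meson less_imp_le order_trans)
qed

text \<open>One greedy step: add a subset of A - E of at least half the largest measure still available.\<close>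

lemma greedy_extension:
  assumes E: "E \<in> sets M" "E \<subseteq> A" "measure M E \<le> r"
  shows "\<exists>E'. (E' \<in> sets M \<and> E' \<subseteq> A \<and> measure M E' \<le> r) \<and> E \<subseteq> E' \<and>
           (\<forall>F\<in>{F \<in> sets M. F \<subseteq> A - E \<and> measure M E + measure M F \<le> r}.
              measure M E + measure M F / 2 \<le> measure M E')"
proof -
  define cand where "cand = {F \<in> sets M. F \<subseteq> A - E \<and> measure M E + measure M F \<le> r}"
  have "{} \<in> cand"
    using E by (simp add: cand_def)
  have bdd: "bdd_above (measure M ` cand)"
    by (intro bdd_aboveI2) (rule bounded_measure)
  define s where "s = (SUP F\<in>cand. measure M F)"
  have le_s: "measure M F \<le> s" if "F \<in> cand" for F
    unfolding s_def using that bdd by (rule cSUP_upper)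
  obtain F0 where F0: "F0 \<in> cand" "\<forall>F\<in>cand. measure M F / 2 \<le> measure M F0"
  proof (cases "s \<le> 0")
    case True
    show ?thesis
      by (rule that[OF \<open>{} \<in> cand\<close>]) (use le_s True in force)
  next
    case False
    then have "s / 2 < s" by simp
    then obtain F0 where "F0 \<in> cand" "s / 2 < measure M F0"
      unfolding s_def using less_cSUP_iff[OF _ bdd] \<open>{} \<in> cand\<close> by blast
    then show ?thesis
      using that le_s by force
  qed
  then have "measure M (E \<union> F0) = measure M E + measure M F0"
    using E by (intro finite_measure_Union) (auto simp: cand_def)
  then show ?thesis
    using E F0 by (intro exI[of _ "E \<union> F0"]) (auto simp: cand_def)
qed

text \<open>Iterating the greedy step yields a subset of A of measure at most r that cannot be enlarged:
  a remaining candidate of positive measure would make the measures of the iterates grow without bound.\<close>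

lemma exists_saturated_subset:
  assumes A: "A \<in> sets M" and r: "0 \<le> r"
  shows "\<exists>E\<in>sets M. E \<subseteq> A \<and> measure M E \<le> r \<and>
           (\<forall>F\<in>sets M. F \<subseteq> A - E \<and> measure M E + measure M F \<le> r \<longrightarrow> measure M F = 0)"
proof -
  define cand where "cand E = {F \<in> sets M. F \<subseteq> A - E \<and> measure M E + measure M F \<le> r}" for E
  define adm where "adm E \<longleftrightarrow> E \<in> sets M \<and> E \<subseteq> A \<and> measure M E \<le> r" for E
  have greedy_step: "\<exists>E'. adm E' \<and> E \<subseteq> E' \<and> (\<forall>F\<in>cand E. measure M E + measure M F / 2 \<le> measure M E')"
    if "adm E" for E
    using greedy_extension that unfolding adm_def cand_def by blast
  have "adm {}"
    using r by (simp add: adm_def)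
  then have "\<exists>seq. \<forall>n. adm (seq n) \<and> seq n \<subseteq> seq (Suc n) \<and>
      (\<forall>F\<in>cand (seq n). measure M (seq n) + measure M F / 2 \<le> measure M (seq (Suc n)))"
    using dependent_nat_choice[of "\<lambda>_. adm"
        "\<lambda>_ E E'. E \<subseteq> E' \<and> (\<forall>F\<in>cand E. measure M E + measure M F / 2 \<le> measure M E')"]
      greedy_step by blast
  then obtain seq where seq: "\<And>n. adm (seq n)" "\<And>n. seq n \<subseteq> seq (Suc n)"
    "\<And>n F. F \<in> cand (seq n) \<Longrightarrow> measure M (seq n) + measure M F / 2 \<le> measure M (seq (Suc n))"
    by blast
  define E where "E = (\<Union>n. seq n)"
  have E: "E \<in> sets M" "E \<subseteq> A"
    using seq(1) by (auto simp: E_def adm_def)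
  have "(\<lambda>n. measure M (seq n)) \<longlonglongrightarrow> measure M E"
    unfolding E_def using seq(1,2) by (intro finite_Lim_measure_incseq) (auto simp: adm_def incseq_SucI)
  then have Er: "measure M E \<le> r"
    using seq(1) by (intro LIMSEQ_le_const2) (auto simp: adm_def)
  have "measure M F = 0" if F: "F \<in> sets M" "F \<subseteq> A - E" "measure M E + measure M F \<le> r" for F
  proof -
    have "F \<in> cand (seq n)" for n
    proof -
      have "measure M (seq n) \<le> measure M E"
        using E by (intro finite_measure_mono) (auto simp: E_def)
      with F show ?thesis
        by (auto simp: cand_def E_def)
    qed
    have "real n * (measure M F / 2) \<le> measure M (seq n)" for n
    proof (induction n)
      case (Suc n)
      then show ?case
        using seq(3)[OF \<open>F \<in> cand (seq n)\<close>] by (simp add: algebra_simps)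
    qed simp
    then have "real n * (measure M F / 2) \<le> r" for n
      using seq(1)[of n] unfolding adm_def by (meson order_trans)
    then have "measure M F / 2 \<le> 0"
      by (rule nonpos_if_multiples_bounded)
    then show ?thesis
      using measure_nonneg[of M F] by linarith
  qed
  with E Er show ?thesis by blast
qed

lemma nonatomic_intermediate_value:
  assumes na: "nonatomic M" and A: "A \<in> sets M" and r: "0 \<le> r" "r \<le> measure M A"
  shows "\<exists>E\<in>sets M. E \<subseteq> A \<and> measure M E = r"
proof -
  obtain E where E: "E \<in> sets M" "E \<subseteq> A" "measure M E \<le> r"
    and sat: "\<And>F. F \<in> sets M \<Longrightarrow> F \<subseteq> A - E \<Longrightarrow> measure M E + measure M F \<le> r \<Longrightarrow> measure M F = 0"
    using exists_saturated_subset[OF A r(1)] by blast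
  show ?thesis
  proof (cases "measure M E = r")
    case False
    have "measure M (A - E) = measure M A - measure M E"
      by (rule finite_measure_Diff[OF A E(1,2)])
    then obtain F where F: "F \<in> sets M" "F \<subseteq> A - E" "0 < measure M F" "measure M F \<le> r - measure M E"
      using nonatomic_small_subset[OF na, of "A - E" "r - measure M E"] A E False r by auto
    then show ?thesis
      using sat[OF F(1,2)] by simp
  qed (use E in blast)
qed

end

subsection \<open>E_\<gamma> and likelihood-ratio sets\<close>

lemma Egamma_upper:
  assumes "finite_measure \<mu>" "A \<in> sets \<mu>" "\<gamma> \<ge> 0"
  shows "measure \<mu> A - \<gamma> * measure \<nu> A \<le> Egamma \<gamma> \<mu> \<nu>"
  unfolding Egamma_def
proof (rule cSUP_upper[OF assms(2)])
  interpret finite_measure \<mu> by fact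
  show "bdd_above ((\<lambda>A. measure \<mu> A - \<gamma> * measure \<nu> A) ` sets \<mu>)"
  proof (rule bdd_aboveI2)
    fix A
    have "0 \<le> \<gamma> * measure \<nu> A"
      using assms(3) by simp
    then show "measure \<mu> A - \<gamma> * measure \<nu> A \<le> measure \<mu> (space \<mu>)"
      using bounded_measure[of A] by linarith
  qed
qed

lemma Egamma_least:
  assumes "\<And>A. A \<in> sets \<mu> \<Longrightarrow> measure \<mu> A - \<gamma> * measure \<nu> A \<le> c"
  shows "Egamma \<gamma> \<mu> \<nu> \<le> c"
  unfolding Egamma_def
  by (rule cSUP_least) (use assms sets.empty_sets in auto)

lemma Egamma_le_shift:
  assumes "finite_measure \<mu>" "finite_measure \<nu>" "0 \<le> g" "h \<le> g"
  shows "Egamma h \<mu> \<nu> \<le> Egamma g \<mu> \<nu> + (g - h) * measure \<nu> (space \<nu>)"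
proof (rule Egamma_least)
  fix A assume "A \<in> sets \<mu>"
  then have "measure \<mu> A - g * measure \<nu> A \<le> Egamma g \<mu> \<nu>"
    using assms by (intro Egamma_upper) auto
  moreover have "(g - h) * measure \<nu> A \<le> (g - h) * measure \<nu> (space \<nu>)"
    using assms finite_measure.bounded_measure by (intro mult_left_mono) auto
  ultimately show "measure \<mu> A - h * measure \<nu> A \<le> Egamma g \<mu> \<nu> + (g - h) * measure \<nu> (space \<nu>)"
    by (simp add: algebra_simps)
qed

locale rn_density =
  fixes Q \<mu> :: "'a measure"
  assumes prob_Q: "prob_space Q" and finite_mu: "finite_measure \<mu>"
    and sets_mu: "sets \<mu> = sets Q" and abs_cont: "absolutely_continuous Q \<mu>"
begin

interpretation Q: prob_space Q by (rule prob_Q)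
interpretation mu: finite_measure \<mu> by (rule finite_mu)

definition dens :: "'a \<Rightarrow> ennreal" where
  "dens = RN_deriv Q \<mu>"

definition above :: "real \<Rightarrow> 'a set" where
  "above \<gamma> = {x \<in> space Q. ennreal \<gamma> < dens x}"

lemma measurable_dens [measurable]: "dens \<in> borel_measurable Q"
  unfolding dens_def by simp

lemma sets_above [measurable]: "above \<gamma> \<in> sets Q"
  unfolding above_def by measurable

lemma space_mu: "space \<mu> = space Q"
  using sets_mu by (rule sets_eq_imp_space_eq)

lemma density_dens: "density Q dens = \<mu>"
  unfolding dens_def by (rule Q.density_RN_deriv[OF abs_cont sets_mu])

lemma emeasure_mu: "A \<in> sets Q \<Longrightarrow> emeasure \<mu> A = (\<integral>\<^sup>+ x. dens x * indicator A x \<partial>Q)"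
  by (subst density_dens[symmetric]) (simp add: emeasure_density)

lemma AE_dens_finite: "AE x in Q. dens x \<noteq> \<infinity>"
  unfolding dens_def
  by (rule Q.RN_deriv_finite[OF _ abs_cont sets_mu]) (simp add: mu.sigma_finite_measure_axioms)

lemma measure_le_of_dens_le:
  assumes A: "A \<in> sets Q" and c: "c \<ge> 0" and le: "\<And>x. x \<in> A \<Longrightarrow> dens x \<le> ennreal c"
  shows "measure \<mu> A \<le> c * measure Q A"
proof -
  have "emeasure \<mu> A \<le> (\<integral>\<^sup>+ x. ennreal c * indicator A x \<partial>Q)"
    unfolding emeasure_mu[OF A] by (intro nn_integral_mono) (auto simp: le indicator_def)
  also have "\<dots> = ennreal (c * measure Q A)"
    using A c by (simp add: nn_integral_cmult_indicator Q.emeasure_eq_measure ennreal_mult)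
  finally show ?thesis
    using c by (simp add: mu.emeasure_eq_measure ennreal_le_iff)
qed

lemma measure_ge_of_dens_ge:
  assumes A: "A \<in> sets Q" and c: "c \<ge> 0" and ge: "\<And>x. x \<in> A \<Longrightarrow> ennreal c \<le> dens x"
  shows "c * measure Q A \<le> measure \<mu> A"
proof -
  have "ennreal (c * measure Q A) = (\<integral>\<^sup>+ x. ennreal c * indicator A x \<partial>Q)"
    using A c by (simp add: nn_integral_cmult_indicator Q.emeasure_eq_measure ennreal_mult)
  also have "\<dots> \<le> emeasure \<mu> A"
    unfolding emeasure_mu[OF A] by (intro nn_integral_mono) (auto simp: ge indicator_def)
  finally show ?thesis
    using c by (simp add: mu.emeasure_eq_measure ennreal_le_iff)
qed

lemma Egamma_eq:
  assumes \<gamma>: "\<gamma> \<ge> 0"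
  shows "Egamma \<gamma> \<mu> Q = measure \<mu> (above \<gamma>) - \<gamma> * measure Q (above \<gamma>)"
proof (rule antisym)
  show "Egamma \<gamma> \<mu> Q \<le> measure \<mu> (above \<gamma>) - \<gamma> * measure Q (above \<gamma>)"
  proof (rule Egamma_least)
    fix A assume "A \<in> sets \<mu>"
    then have A: "A \<in> sets Q" using sets_mu by simp
    have "measure \<mu> (A - above \<gamma>) \<le> \<gamma> * measure Q (A - above \<gamma>)"
      by (rule measure_le_of_dens_le)
        (use A \<gamma> in \<open>auto simp: above_def not_less dest: sets.sets_into_space\<close>)
    moreover have "\<gamma> * measure Q (above \<gamma> - A) \<le> measure \<mu> (above \<gamma> - A)"
      by (rule measure_ge_of_dens_ge) (use A \<gamma> in \<open>auto simp: above_def\<close>)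
    moreover have "measure \<mu> A = measure \<mu> (A \<inter> above \<gamma>) + measure \<mu> (A - above \<gamma>)"
      "measure \<mu> (above \<gamma>) = measure \<mu> (A \<inter> above \<gamma>) + measure \<mu> (above \<gamma> - A)"
      using mu.finite_measure_Diff'[of A "above \<gamma>"] mu.finite_measure_Diff'[of "above \<gamma>" A] A sets_mu
      by (simp_all add: Int_commute)
    moreover have "measure Q A = measure Q (A \<inter> above \<gamma>) + measure Q (A - above \<gamma>)"
      "measure Q (above \<gamma>) = measure Q (A \<inter> above \<gamma>) + measure Q (above \<gamma> - A)"
      using Q.finite_measure_Diff'[of A "above \<gamma>"] Q.finite_measure_Diff'[of "above \<gamma>" A] A
      by (simp_all add: Int_commute)
    ultimately show "measure \<mu> A - \<gamma> * measure Q A \<le> measure \<mu> (above \<gamma>) - \<gamma> * measure Q (above \<gamma>)"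
      by (simp add: algebra_simps)
  qed
qed (rule Egamma_upper[OF finite_mu _ \<gamma>], simp add: sets_mu)

lemma nn_integral_min_dens:
  assumes \<gamma>: "\<gamma> \<ge> 0"
  shows "(\<integral>\<^sup>+ x. min (dens x) (ennreal \<gamma>) \<partial>Q) = ennreal (measure \<mu> (space \<mu>) - Egamma \<gamma> \<mu> Q)"
proof -
  have "(\<integral>\<^sup>+ x. min (dens x) (ennreal \<gamma>) \<partial>Q)
      = (\<integral>\<^sup>+ x. dens x * indicator (space Q - above \<gamma>) x + ennreal \<gamma> * indicator (above \<gamma>) x \<partial>Q)"
    by (intro nn_integral_cong) (auto simp: above_def indicator_def min_def)
  also have "\<dots> = emeasure \<mu> (space Q - above \<gamma>) + ennreal \<gamma> * emeasure Q (above \<gamma>)"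
    by (simp add: nn_integral_add emeasure_mu nn_integral_cmult_indicator)
  also have "\<dots> = ennreal (measure \<mu> (space Q - above \<gamma>) + \<gamma> * measure Q (above \<gamma>))"
    using \<gamma> by (simp add: mu.emeasure_eq_measure Q.emeasure_eq_measure ennreal_mult ennreal_plus)
  also have "measure \<mu> (space Q - above \<gamma>) + \<gamma> * measure Q (above \<gamma>) = measure \<mu> (space \<mu>) - Egamma \<gamma> \<mu> Q"
    using Egamma_eq[OF \<gamma>] mu.finite_measure_compl[of "above \<gamma>"] sets_mu space_mu by simp
  finally show ?thesis .
qed

lemma measure_density_min_dens:
  assumes g: "g \<ge> 0" and A[measurable]: "A \<in> sets Q"
  shows "measure (density Q (\<lambda>x. min (dens x) (ennreal g))) A
           = g * measure Q (A \<inter> above g) + measure \<mu> (A - above g)"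
proof -
  let ?\<nu> = "density Q (\<lambda>x. min (dens x) (ennreal g))"
  have "emeasure ?\<nu> (A \<inter> above g) = (\<integral>\<^sup>+ x. ennreal g * indicator (A \<inter> above g) x \<partial>Q)"
    by (simp add: emeasure_density, intro nn_integral_cong) (auto simp: indicator_def above_def min_def)
  also have "\<dots> = ennreal (g * measure Q (A \<inter> above g))"
    using g by (simp add: nn_integral_cmult_indicator Q.emeasure_eq_measure ennreal_mult)
  finally have inside: "emeasure ?\<nu> (A \<inter> above g) = ennreal (g * measure Q (A \<inter> above g))" .
  have "emeasure ?\<nu> (A - above g) = (\<integral>\<^sup>+ x. dens x * indicator (A - above g) x \<partial>Q)"
    using sets.sets_into_space[OF A]
    by (simp add: emeasure_density, intro nn_integral_cong) (auto simp: indicator_def above_def min_def not_less)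
  also have "\<dots> = ennreal (measure \<mu> (A - above g))"
    by (simp add: emeasure_mu[symmetric] mu.emeasure_eq_measure)
  finally have outside: "emeasure ?\<nu> (A - above g) = ennreal (measure \<mu> (A - above g))" .
  have "emeasure ?\<nu> A = emeasure ?\<nu> (A \<inter> above g) + emeasure ?\<nu> (A - above g)"
    by (subst plus_emeasure) (auto simp: Int_Diff_Un)
  then show ?thesis
    using g by (simp add: inside outside measure_def ennreal_plus[symmetric] del: ennreal_plus)
qed

lemma Egamma_vanishes:
  assumes "0 < e"
  shows "\<exists>g>0. Egamma g \<mu> Q \<le> e"
proof -
  have "decseq (\<lambda>n. above (real n))"
    by (intro decseq_SucI) (auto simp: above_def intro: order.strict_trans1[rotated])
  then have "(\<lambda>n. measure \<mu> (above (real n))) \<longlonglongrightarrow> measure \<mu> (\<Inter>n. above (real n))"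
    by (intro mu.finite_Lim_measure_decseq) (auto simp: sets_mu)
  moreover have "(\<Inter>n. above (real n)) = {x \<in> space Q. dens x = \<infinity>}"
    by (auto simp: above_def ennreal_of_nat_eq_real_of_nat[symmetric] of_nat_less_top)
      (meson ennreal_Ex_less_of_nat less_asym top.not_eq_extremum)
  moreover have "emeasure \<mu> {x \<in> space Q. dens x = \<infinity>} = 0"
  proof (rule absolutely_continuousD[OF abs_cont])
    show "emeasure Q {x \<in> space Q. dens x = \<infinity>} = 0"
      using AE_dens_finite by (intro emeasure_eq_0_AE) simp
  qed measurable
  ultimately have "(\<lambda>n. measure \<mu> (above (real n))) \<longlonglongrightarrow> 0"
    by (simp add: measure_def)
  then have "eventually (\<lambda>n. measure \<mu> (above (real n)) < e) sequentially"
    using assms by (rule order_tendstoD(2))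
  then obtain N where "\<And>n. n \<ge> N \<Longrightarrow> measure \<mu> (above (real n)) < e"
    by (auto simp: eventually_sequentially)
  from this[of "Suc N"] have "measure \<mu> (above (real (Suc N))) < e"
    by simp
  moreover have "0 \<le> real (Suc N) * measure Q (above (real (Suc N)))"
    by simp
  ultimately have "Egamma (real (Suc N)) \<mu> Q \<le> e"
    using Egamma_eq[of "real (Suc N)"] by linarith
  then show ?thesis
    by (intro exI[of _ "real (Suc N)"]) simp
qed

lemma renyi_0_eq_support:
  "renyi b 0 \<mu> Q = elog b (1 / emeasure Q {x \<in> space Q. dens x \<noteq> 0})"
  by (simp add: renyi_def dens_def elog_eq_minf_iff)

lemma renyi_eq_moment:
  "\<alpha> \<noteq> 0 \<Longrightarrow> renyi b (ereal \<alpha>) \<mu> Q =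
     ereal (1 / (\<alpha> - 1)) * elog b (\<integral>\<^sup>+ x. ennreal (enn2real (dens x) powr \<alpha>) \<partial>Q)"
  by (simp add: renyi_def dens_def)

lemma support_measure_ge_Egamma:
  assumes \<gamma>: "\<gamma> \<ge> 0"
  shows "measure \<mu> (space \<mu>) - Egamma \<gamma> \<mu> Q \<le> \<gamma> * measure Q {x \<in> space Q. dens x \<noteq> 0}"
proof -
  define T where "T = {x \<in> space Q. dens x \<noteq> 0}"
  have "ennreal (measure \<mu> (space \<mu>) - Egamma \<gamma> \<mu> Q) = (\<integral>\<^sup>+ x. min (dens x) (ennreal \<gamma>) \<partial>Q)"
    using \<gamma> by (simp add: nn_integral_min_dens)
  also have "\<dots> \<le> (\<integral>\<^sup>+ x. ennreal \<gamma> * indicator T x \<partial>Q)"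
    by (intro nn_integral_mono) (auto simp: T_def indicator_def)
  also have "\<dots> = ennreal (\<gamma> * measure Q T)"
    using \<gamma> by (simp add: T_def nn_integral_cmult_indicator Q.emeasure_eq_measure ennreal_mult)
  finally show ?thesis
    using \<gamma> by (simp add: T_def ennreal_le_iff)
qed

lemma nn_integral_powr_ge_Egamma_lt1:
  assumes \<gamma>: "\<gamma> > 0" and \<alpha>: "0 \<le> \<alpha>" "\<alpha> \<le> 1"
  shows "ennreal (\<gamma> powr (\<alpha> - 1) * (measure \<mu> (space \<mu>) - Egamma \<gamma> \<mu> Q))
           \<le> (\<integral>\<^sup>+ x. ennreal (enn2real (dens x) powr \<alpha>) \<partial>Q)"
proof -
  have "ennreal (\<gamma> powr (\<alpha> - 1) * (measure \<mu> (space \<mu>) - Egamma \<gamma> \<mu> Q))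
      = (\<integral>\<^sup>+ x. ennreal (\<gamma> powr (\<alpha> - 1)) * min (dens x) (ennreal \<gamma>) \<partial>Q)"
    using \<gamma> by (simp add: nn_integral_cmult nn_integral_min_dens ennreal_mult')
  also have "\<dots> \<le> (\<integral>\<^sup>+ x. ennreal (enn2real (dens x) powr \<alpha>) \<partial>Q)"
  proof (rule nn_integral_mono_AE)
    show "AE x in Q. ennreal (\<gamma> powr (\<alpha> - 1)) * min (dens x) (ennreal \<gamma>) \<le> ennreal (enn2real (dens x) powr \<alpha>)"
      using AE_dens_finite
    proof eventually_elim
      case (elim x)
      then obtain t where t: "dens x = ennreal t" "0 \<le> t"
        by (cases "dens x" rule: ennreal_cases) auto
      then have "ennreal (\<gamma> powr (\<alpha> - 1)) * min (dens x) (ennreal \<gamma>) = ennreal (\<gamma> powr (\<alpha> - 1) * min t \<gamma>)"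
        using \<gamma> by (simp add: min_ennreal ennreal_mult)
      also have "\<dots> \<le> ennreal (enn2real (dens x) powr \<alpha>)"
        using t \<gamma> \<alpha> by (intro ennreal_leI) (simp add: powr_ge_scaled_min)
      finally show ?case .
    qed
  qed
  finally show ?thesis .
qed

lemma nn_integral_powr_ge_Egamma_gt1:
  assumes \<gamma>: "\<gamma> > 0" and \<alpha>: "\<alpha> \<ge> 1"
  shows "ennreal (\<gamma> powr (\<alpha> - 1) * Egamma \<gamma> \<mu> Q) \<le> (\<integral>\<^sup>+ x. ennreal (enn2real (dens x) powr \<alpha>) \<partial>Q)"
proof -
  have "0 \<le> \<gamma> * measure Q (above \<gamma>)"
    using \<gamma> by simp
  then have "Egamma \<gamma> \<mu> Q \<le> measure \<mu> (above \<gamma>)"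
    using Egamma_eq[of \<gamma>] \<gamma> by linarith
  then have "ennreal (\<gamma> powr (\<alpha> - 1) * Egamma \<gamma> \<mu> Q) \<le> ennreal (\<gamma> powr (\<alpha> - 1) * measure \<mu> (above \<gamma>))"
    by (intro ennreal_leI mult_left_mono) auto
  also have "\<dots> = (\<integral>\<^sup>+ x. ennreal (\<gamma> powr (\<alpha> - 1)) * (dens x * indicator (above \<gamma>) x) \<partial>Q)"
    by (simp add: nn_integral_cmult emeasure_mu[symmetric] mu.emeasure_eq_measure ennreal_mult)
  also have "\<dots> \<le> (\<integral>\<^sup>+ x. ennreal (enn2real (dens x) powr \<alpha>) \<partial>Q)"
  proof (rule nn_integral_mono_AE)
    show "AE x in Q. ennreal (\<gamma> powr (\<alpha> - 1)) * (dens x * indicator (above \<gamma>) x) \<le> ennreal (enn2real (dens x) powr \<alpha>)"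
      using AE_dens_finite
    proof eventually_elim
      case (elim x)
      show ?case
      proof (cases "x \<in> above \<gamma>")
        case True
        with elim obtain t where t: "dens x = ennreal t" "\<gamma> < t"
          using \<gamma> by (cases "dens x" rule: ennreal_cases) (auto simp: above_def ennreal_less_iff)
        then have "ennreal (\<gamma> powr (\<alpha> - 1)) * (dens x * indicator (above \<gamma>) x) = ennreal (\<gamma> powr (\<alpha> - 1) * t)"
          using True \<gamma> by (simp add: ennreal_mult)
        also have "\<dots> \<le> ennreal (enn2real (dens x) powr \<alpha>)"
          using t \<gamma> \<alpha> by (intro ennreal_leI) (simp add: powr_ge_scaled)
        finally show ?thesis .
      qed simp
    qed
  qed
  finally show ?thesis .
qed

lemma renyi_le_of_Egamma:
  assumes b: "b > 1" and \<gamma>: "\<gamma> > 0" and \<alpha>: "0 \<le> \<alpha>" "\<alpha> < 1"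
    and K: "0 < K" "K \<le> measure \<mu> (space \<mu>) - Egamma \<gamma> \<mu> Q"
  shows "renyi b (ereal \<alpha>) \<mu> Q \<le> ereal (log b \<gamma> - 1 / (1 - \<alpha>) * log b K)"
proof (cases "\<alpha> = 0")
  case True
  define T where "T = {x \<in> space Q. dens x \<noteq> 0}"
  have KT: "K \<le> \<gamma> * measure Q T"
    using K support_measure_ge_Egamma[of \<gamma>] \<gamma> by (simp add: T_def)
  then have QT: "measure Q T > 0"
    using zero_less_mult_pos[of \<gamma> "measure Q T"] K \<gamma> by linarith
  have "renyi b (ereal \<alpha>) \<mu> Q = ereal (log b (1 / measure Q T))"
    using True QT by (simp add: renyi_0_eq_support T_def[symmetric] zero_ereal_def[symmetric]
        Q.emeasure_eq_measure elog_one_div_ennreal)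
  also have "log b (1 / measure Q T) \<le> log b \<gamma> - log b K"
  proof -
    have "log b K \<le> log b (\<gamma> * measure Q T)"
      using KT K b by simp
    then show ?thesis
      using \<gamma> QT b by (simp add: log_divide log_mult)
  qed
  finally show ?thesis
    using True by simp
next
  case False
  have "ennreal (\<gamma> powr (\<alpha> - 1) * K) \<le> ennreal (\<gamma> powr (\<alpha> - 1) * (measure \<mu> (space \<mu>) - Egamma \<gamma> \<mu> Q))"
    using K by (intro ennreal_leI mult_left_mono) auto
  also have "\<dots> \<le> (\<integral>\<^sup>+ x. ennreal (enn2real (dens x) powr \<alpha>) \<partial>Q)"
    using \<gamma> \<alpha> by (intro nn_integral_powr_ge_Egamma_lt1) auto
  finally show ?thesis
    using scaled_elog_le[OF b \<gamma> K(1) \<alpha>(2)] False by (simp add: renyi_eq_moment)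
qed

lemma renyi_ge_of_Egamma:
  assumes b: "b > 1" and \<gamma>: "\<gamma> > 0" and \<alpha>: "\<alpha> > 1"
    and K: "0 < K" "K \<le> Egamma \<gamma> \<mu> Q"
  shows "ereal (log b \<gamma> + 1 / (\<alpha> - 1) * log b K) \<le> renyi b (ereal \<alpha>) \<mu> Q"
proof -
  have "ennreal (\<gamma> powr (\<alpha> - 1) * K) \<le> ennreal (\<gamma> powr (\<alpha> - 1) * Egamma \<gamma> \<mu> Q)"
    using K by (intro ennreal_leI mult_left_mono) auto
  also have "\<dots> \<le> (\<integral>\<^sup>+ x. ennreal (enn2real (dens x) powr \<alpha>) \<partial>Q)"
    using \<gamma> \<alpha> by (intro nn_integral_powr_ge_Egamma_gt1) auto
  finally show ?thesis
    using scaled_elog_ge[OF b \<gamma> K(1) \<alpha>] \<alpha> by (simp add: renyi_eq_moment)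
qed

lemma renyi_le_Egamma:
  assumes b: "b > 1" and \<gamma>: "\<gamma> > 0" and \<alpha>: "0 \<le> \<alpha>" "\<alpha> < 1"
  shows "renyi b (ereal \<alpha>) \<mu> Q \<le> ereal (log b \<gamma>)
           - ereal (1 / (1 - \<alpha>)) * elog b (ennreal (measure \<mu> (space \<mu>) - Egamma \<gamma> \<mu> Q))"
proof (cases "measure \<mu> (space \<mu>) - Egamma \<gamma> \<mu> Q > 0")
  case True
  then show ?thesis
    using renyi_le_of_Egamma[OF b \<gamma> \<alpha> True order.refl] by (simp add: elog_ennreal)
qed (use \<alpha> in \<open>simp add: elog_ennreal_nonpos\<close>)

lemma renyi_ge_Egamma:
  assumes b: "b > 1" and \<gamma>: "\<gamma> > 0" and \<alpha>: "\<alpha> > 1"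
  shows "ereal (log b \<gamma>) + ereal (1 / (\<alpha> - 1)) * elog b (ennreal (Egamma \<gamma> \<mu> Q)) \<le> renyi b (ereal \<alpha>) \<mu> Q"
proof (cases "Egamma \<gamma> \<mu> Q > 0")
  case True
  then show ?thesis
    using renyi_ge_of_Egamma[OF b \<gamma> \<alpha> True order.refl] by (simp add: elog_ennreal)
qed (use \<alpha> in \<open>simp add: elog_ennreal_nonpos\<close>)

lemma renyi_infinity_ge:
  assumes b: "b > 1" and g: "g > 0" and E: "Egamma g \<mu> Q > 0"
  shows "ereal (log b g) \<le> renyi b \<infinity> \<mu> Q"
proof (rule ccontr)
  assume "\<not> ?thesis"
  then have lt: "esssup \<mu> (\<lambda>x. elog b (dens x)) < ereal (log b g)"
    by (simp add: renyi_def dens_def not_le)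
  have "AE x in \<mu>. x \<notin> above g"
    using esssup_AE[of "\<lambda>x. elog b (dens x)" \<mu>]
  proof eventually_elim
    case (elim x)
    show ?case
    proof
      assume "x \<in> above g"
      then have "ereal (log b g) < elog b (dens x)"
        using log_less_elog_iff[OF b g] by (simp add: above_def)
      then show False
        using order.strict_trans1[OF elim lt] by simp
    qed
  qed
  then have "emeasure \<mu> {x \<in> space \<mu>. x \<in> above g} = 0"
    by (intro emeasure_eq_0_AE) simp
  moreover have "{x \<in> space \<mu>. x \<in> above g} = above g"
    by (auto simp: above_def space_mu)
  ultimately have "measure \<mu> (above g) = 0"
    by (simp add: measure_def)
  moreover have "0 \<le> g * measure Q (above g)"
    using g by simp
  ultimately show False
    using Egamma_eq[of g] E g by linarith
qed

lemma renyi_infinity_le: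
  assumes b: "b > 1" and g: "g > 0" and le: "AE x in Q. dens x \<le> ennreal g"
  shows "renyi b \<infinity> \<mu> Q \<le> ereal (log b g)"
proof -
  have "AE x in \<mu>. elog b (dens x) \<le> ereal (log b g)"
    using absolutely_continuous_AE[OF sets_mu abs_cont le] elog_le_log_iff[OF b g] by simp
  moreover have "(\<lambda>x. elog b (dens x)) \<in> borel_measurable \<mu>"
    using sets_mu by (simp cong: measurable_cong_sets)
  ultimately show ?thesis
    by (simp add: renyi_def dens_def[symmetric] esssup_I)
qed

end

locale smooth_divergence =
  fixes b \<epsilon> :: real and P Q :: "'a measure"
  assumes base: "b > 1" and prob_P: "prob_space P" and prob_Q: "prob_space Q"
    and sets_P: "sets P = sets Q" and abs_cont_P: "absolutely_continuous Q P"
    and eps: "0 < \<epsilon>" "\<epsilon> < 1"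
begin

interpretation Q: prob_space Q by (rule prob_Q)
interpretation P: prob_space P by (rule prob_P)

sublocale PQ: rn_density Q P
  by unfold_locales (auto simp: prob_Q sets_P abs_cont_P P.finite_measure_axioms)

abbreviation p :: "'a \<Rightarrow> ennreal" where
  "p \<equiv> PQ.dens"

lemma space_P: "space P = space Q"
  by (rule PQ.space_mu)

lemma measurable_info_dens [measurable]: "info_dens b P Q \<in> borel_measurable Q"
  unfolding info_dens_def by measurable

lemma info_dens_superlevel_eq_above:
  assumes "g > 0"
  shows "{x \<in> space P. ereal (log b g) < info_dens b P Q x} = PQ.above g"
  using log_less_elog_iff[OF base assms]
  by (auto simp: info_dens_def PQ.above_def PQ.dens_def space_P)

lemma Bball_rn_density: "\<mu> \<in> Bball \<epsilon> P Q \<Longrightarrow> rn_density Q \<mu>"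
  by (intro rn_density.intro prob_Q) (auto simp: Bball_def sets_P)

lemma Bball_measure_diff_le:
  assumes "\<mu> \<in> Bball \<epsilon> P Q" "A \<in> sets Q"
  shows "measure P A - measure \<mu> A \<le> \<epsilon>"
  using Egamma_upper[OF P.finite_measure_axioms, of A 1 \<mu>] assms by (simp add: Bball_def sets_P)

lemma Egamma_Bball_ge:
  assumes \<mu>: "\<mu> \<in> Bball \<epsilon> P Q" and \<gamma>: "\<gamma> \<ge> 0"
  shows "Egamma \<gamma> P Q - \<epsilon> \<le> Egamma \<gamma> \<mu> Q"
proof -
  interpret M: rn_density Q \<mu> by (rule Bball_rn_density[OF \<mu>])
  have "measure \<mu> (PQ.above \<gamma>) - \<gamma> * measure Q (PQ.above \<gamma>) \<le> Egamma \<gamma> \<mu> Q"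
    by (rule Egamma_upper) (use \<gamma> in \<open>auto simp: M.sets_mu M.finite_mu\<close>)
  then show ?thesis
    using PQ.Egamma_eq[OF \<gamma>] Bball_measure_diff_le[OF \<mu> PQ.sets_above[of \<gamma>]] by simp
qed

lemma Egamma_Bball_compl:
  assumes \<mu>: "\<mu> \<in> Bball \<epsilon> P Q" and \<gamma>: "\<gamma> \<ge> 0"
  shows "1 - \<epsilon> - Egamma \<gamma> P Q \<le> measure \<mu> (space \<mu>) - Egamma \<gamma> \<mu> Q"
proof -
  interpret M: rn_density Q \<mu> by (rule Bball_rn_density[OF \<mu>])
  have "measure P (M.above \<gamma>) - \<gamma> * measure Q (M.above \<gamma>) \<le> Egamma \<gamma> P Q"
    by (rule Egamma_upper) (use \<gamma> in \<open>auto simp: sets_P P.finite_measure_axioms\<close>)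
  moreover have "measure P (space Q - M.above \<gamma>) - measure \<mu> (space Q - M.above \<gamma>) \<le> \<epsilon>"
    by (rule Bball_measure_diff_le[OF \<mu>]) auto
  moreover have "measure P (space Q - M.above \<gamma>) = 1 - measure P (M.above \<gamma>)"
    using P.prob_compl[of "M.above \<gamma>"] space_P sets_P by simp
  moreover have "measure \<mu> (space \<mu>) = measure \<mu> (space Q - M.above \<gamma>) + measure \<mu> (M.above \<gamma>)"
    using finite_measure.finite_measure_compl[OF M.finite_mu, of "M.above \<gamma>"] M.space_mu M.sets_mu
    by simp
  ultimately show ?thesis
    using M.Egamma_eq[OF \<gamma>] by simp
qed

lemma density_in_Bball:
  assumes f[measurable]: "f \<in> borel_measurable Q" and le: "\<And>x. x \<in> space Q \<Longrightarrow> f x \<le> p x"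
    and close: "\<And>A. A \<in> sets Q \<Longrightarrow> measure P A - measure (density Q f) A \<le> \<epsilon>"
  shows "density Q f \<in> Bball \<epsilon> P Q"
proof -
  have "emeasure (density Q f) (space Q) \<le> (\<integral>\<^sup>+ x. p x * indicator (space Q) x \<partial>Q)"
    by (auto simp: emeasure_density intro!: nn_integral_mono le split: split_indicator)
  also have "\<dots> = emeasure P (space Q)"
    by (simp add: PQ.emeasure_mu)
  also have "\<dots> = 1"
    using P.emeasure_space_1 space_P by simp
  finally have "finite_measure (density Q f)"
    by (intro finite_measureI) (auto simp: top_unique)
  moreover have "Egamma 1 P (density Q f) \<le> \<epsilon>"
    by (rule Egamma_least) (use close in \<open>simp add: sets_P\<close>)
  ultimately show ?thesis
    by (auto simp: Bball_def sets_P intro: absolutely_continuousI_density)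
qed

lemma Fbar_eq:
  assumes "\<gamma> > 0"
  shows "Fbar b \<gamma> P Q = measure P (PQ.above \<gamma>)"
  using info_dens_superlevel_eq_above[OF assms] by (simp add: Fbar_def)

lemma Egamma_le_Fbar:
  assumes "\<gamma> > 0"
  shows "Egamma \<gamma> P Q \<le> Fbar b \<gamma> P Q"
  using PQ.Egamma_eq[of \<gamma>] Fbar_eq[OF assms] assms by simp

lemma Fbar_le_Egamma:
  assumes \<gamma>: "\<gamma> > 0" and a: "a > 1"
  shows "Fbar b \<gamma> P Q \<le> a / (a - 1) * Egamma (\<gamma> / a) P Q"
proof -
  have "measure P (PQ.above \<gamma>) - \<gamma> / a * measure Q (PQ.above \<gamma>) \<le> Egamma (\<gamma> / a) P Q"
    by (rule Egamma_upper) (use \<gamma> a in \<open>auto simp: sets_P P.finite_measure_axioms\<close>)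
  moreover have "\<gamma> * measure Q (PQ.above \<gamma>) \<le> measure P (PQ.above \<gamma>)"
    by (rule PQ.measure_ge_of_dens_ge) (use \<gamma> in \<open>auto simp: PQ.above_def\<close>)
  ultimately have "measure P (PQ.above \<gamma>) * (a - 1) / a \<le> Egamma (\<gamma> / a) P Q"
    using a by (simp add: field_simps)
  then show ?thesis
    using Fbar_eq[OF \<gamma>] a by (simp add: field_simps)
qed

lemma nn_integral_neg_info_dens_le:
  "(\<integral>\<^sup>+ x. e2ennreal (max 0 (- info_dens b P Q x)) \<partial>P) \<le> ennreal (exp (-1) * log b (exp 1))"
proof -
  define c where "c = exp (-1) * log b (exp 1)"
  have "(\<integral>\<^sup>+ x. e2ennreal (max 0 (- info_dens b P Q x)) \<partial>P)
      = (\<integral>\<^sup>+ x. e2ennreal (max 0 (- elog b (p x))) \<partial>density Q p)"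
    by (simp only: info_dens_def PQ.dens_def[symmetric] PQ.density_dens)
  also have "\<dots> = (\<integral>\<^sup>+ x. p x * e2ennreal (max 0 (- elog b (p x))) \<partial>Q)"
    by (rule nn_integral_density) measurable
  also have "\<dots> \<le> (\<integral>\<^sup>+ x. ennreal c \<partial>Q)"
  proof (rule nn_integral_mono)
    fix x
    show "p x * e2ennreal (max 0 (- elog b (p x))) \<le> ennreal c"
    proof (cases "p x" rule: ennreal_cases)
      case (real r)
      show ?thesis
      proof (cases "r = 0")
        case False
        with real have r: "0 < r" "elog b (p x) = ereal (log b r)"
          by (auto simp: elog_ennreal)
        show ?thesis
        proof (cases "log b r < 0")
          case True
          then have "p x * e2ennreal (max 0 (- elog b (p x))) = ennreal (r * (- log b r))"
            using real r ennreal_mult'[of r "- log b r"] by simp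
          also have "\<dots> \<le> ennreal c"
            unfolding c_def using neg_mult_log_le[OF base r(1)] by (rule ennreal_leI)
          finally show ?thesis .
        qed (use r in \<open>simp add: max_def\<close>)
      qed (use real in simp)
    qed (simp add: elog_def)
  qed
  also have "\<dots> = ennreal c"
    by (simp add: Q.emeasure_space_1)
  finally show ?thesis
    unfolding c_def .
qed

lemma nn_integral_pos_info_dens_ge:
  assumes \<gamma>: "\<gamma> \<ge> 1"
  shows "ennreal (log b \<gamma> * measure P (PQ.above \<gamma>)) \<le> (\<integral>\<^sup>+ x. e2ennreal (max 0 (info_dens b P Q x)) \<partial>P)"
proof -
  have "ennreal (log b \<gamma> * measure P (PQ.above \<gamma>)) = (\<integral>\<^sup>+ x. ennreal (log b \<gamma>) * indicator (PQ.above \<gamma>) x \<partial>P)"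
    using \<gamma> base by (simp add: nn_integral_cmult_indicator sets_P P.emeasure_eq_measure ennreal_mult)
  also have "\<dots> \<le> (\<integral>\<^sup>+ x. e2ennreal (max 0 (info_dens b P Q x)) \<partial>P)"
  proof (rule nn_integral_mono)
    fix x
    have "ereal (log b \<gamma>) \<le> max 0 (info_dens b P Q x)" if "x \<in> PQ.above \<gamma>"
      using that info_dens_superlevel_eq_above[of \<gamma>] \<gamma> space_P
      by (auto simp: PQ.above_def intro: max.coboundedI2 less_imp_le)
    from e2ennreal_mono[OF this] show "ennreal (log b \<gamma>) * indicator (PQ.above \<gamma>) x \<le> e2ennreal (max 0 (info_dens b P Q x))"
      by (auto split: split_indicator)
  qed
  finally show ?thesis .
qed

lemma relent_le_tail_integral:
  "relent b P Q \<le> enn2ereal (\<integral>\<^sup>+ \<tau>\<in>{0..}. ennreal (measure P {x \<in> space P. info_dens b P Q x > ereal \<tau>}) \<partial>lborel)"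
proof -
  have [measurable]: "(\<lambda>x. e2ennreal (max 0 (info_dens b P Q x))) \<in> borel_measurable P"
    using sets_P by (simp cong: measurable_cong_sets)
  have "relent b P Q \<le> enn2ereal (\<integral>\<^sup>+ x. e2ennreal (max 0 (info_dens b P Q x)) \<partial>P)"
    unfolding relent_def by (intro ereal_diff_le_self) (simp add: enn2ereal_nonneg)
  also have "(\<integral>\<^sup>+ x. e2ennreal (max 0 (info_dens b P Q x)) \<partial>P)
      = (\<integral>\<^sup>+ \<tau>\<in>{0..}. emeasure P {x \<in> space P. ennreal \<tau> < e2ennreal (max 0 (info_dens b P Q x))} \<partial>lborel)"
    by (rule nn_integral_layer_cake) (auto intro: P.sigma_finite_measure_axioms)
  also have "\<dots> = (\<integral>\<^sup>+ \<tau>\<in>{0..}. ennreal (measure P {x \<in> space P. info_dens b P Q x > ereal \<tau>}) \<partial>lborel)"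
    by (intro nn_integral_cong)
      (auto simp: ennreal_less_e2ennreal_max_iff P.emeasure_eq_measure split: split_indicator)
  finally show ?thesis .
qed

lemma relent_ge_Egamma:
  assumes \<gamma>: "\<gamma> \<ge> 1"
  shows "ereal (Egamma \<gamma> P Q * log b \<gamma> - 2 * exp (-1) * log b (exp 1)) \<le> relent b P Q"
proof -
  define c where "c = exp (-1) * log b (exp 1)"
  have c: "c \<ge> 0" and lg: "log b \<gamma> \<ge> 0"
    using base \<gamma> by (simp_all add: c_def)
  have "ereal (log b \<gamma> * measure P (PQ.above \<gamma>)) \<le> enn2ereal (\<integral>\<^sup>+ x. e2ennreal (max 0 (info_dens b P Q x)) \<partial>P)"
    using nn_integral_pos_info_dens_ge[OF \<gamma>] lg by (simp add: less_eq_ennreal.rep_eq)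
  moreover have "enn2ereal (\<integral>\<^sup>+ x. e2ennreal (max 0 (- info_dens b P Q x)) \<partial>P) \<le> ereal c"
    using nn_integral_neg_info_dens_le c by (simp add: c_def less_eq_ennreal.rep_eq)
  ultimately have R: "ereal (log b \<gamma> * measure P (PQ.above \<gamma>) - c) \<le> relent b P Q"
    unfolding relent_def by (metis ereal_minus(1) ereal_minus_mono)
  have "Egamma \<gamma> P Q * log b \<gamma> \<le> measure P (PQ.above \<gamma>) * log b \<gamma>"
    using Egamma_le_Fbar[of \<gamma>] Fbar_eq[of \<gamma>] \<gamma> lg by (intro mult_right_mono) auto
  then have "Egamma \<gamma> P Q * log b \<gamma> - 2 * c \<le> log b \<gamma> * measure P (PQ.above \<gamma>) - c"
    using c by (simp add: mult.commute)
  then have "ereal (Egamma \<gamma> P Q * log b \<gamma> - 2 * c) \<le> relent b P Q"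
    using R by (meson ereal_less_eq(3) order_trans)
  then show ?thesis
    by (simp add: c_def mult.assoc)
qed

subsection \<open>Smooth R\<acute>enyi divergences\<close>

lemma renyi_plus_le:
  assumes \<gamma>: "\<gamma> > 0" and \<alpha>: "0 \<le> \<alpha>" "\<alpha> < 1" and E: "Egamma \<gamma> P Q < 1 - \<epsilon>"
  shows "renyi_plus b (ereal \<alpha>) \<epsilon> P Q \<le> ereal (log b \<gamma> - 1 / (1 - \<alpha>) * log b (1 - \<epsilon> - Egamma \<gamma> P Q))"
  unfolding renyi_plus_def
proof (rule SUP_least)
  fix \<mu> assume \<mu>: "\<mu> \<in> Bball \<epsilon> P Q"
  interpret M: rn_density Q \<mu> by (rule Bball_rn_density[OF \<mu>])
  show "renyi b (ereal \<alpha>) \<mu> Q \<le> ereal (log b \<gamma> - 1 / (1 - \<alpha>) * log b (1 - \<epsilon> - Egamma \<gamma> P Q))"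
    using E Egamma_Bball_compl[OF \<mu>] \<gamma> by (intro M.renyi_le_of_Egamma[OF base \<gamma> \<alpha>]) auto
qed

lemma renyi_minus_ge:
  assumes \<gamma>: "\<gamma> > 0" and \<alpha>: "\<alpha> > 1" and E: "Egamma \<gamma> P Q > \<epsilon>"
  shows "ereal (log b \<gamma> + 1 / (\<alpha> - 1) * log b (Egamma \<gamma> P Q - \<epsilon>)) \<le> renyi_minus b (ereal \<alpha>) \<epsilon> P Q"
  unfolding renyi_minus_def
proof (rule INF_greatest)
  fix \<mu> assume \<mu>: "\<mu> \<in> Bball \<epsilon> P Q"
  interpret M: rn_density Q \<mu> by (rule Bball_rn_density[OF \<mu>])
  show "ereal (log b \<gamma> + 1 / (\<alpha> - 1) * log b (Egamma \<gamma> P Q - \<epsilon>)) \<le> renyi b (ereal \<alpha>) \<mu> Q"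
    using E Egamma_Bball_ge[OF \<mu>] \<gamma> by (intro M.renyi_ge_of_Egamma[OF base \<gamma> \<alpha>]) auto
qed

lemma renyi_minus_infinity_ge:
  assumes \<gamma>: "\<gamma> > 0" and E: "Egamma \<gamma> P Q > \<epsilon>"
  shows "ereal (log b \<gamma>) \<le> renyi_minus b \<infinity> \<epsilon> P Q"
  unfolding renyi_minus_def
proof (rule INF_greatest)
  fix \<mu> assume \<mu>: "\<mu> \<in> Bball \<epsilon> P Q"
  interpret M: rn_density Q \<mu> by (rule Bball_rn_density[OF \<mu>])
  show "ereal (log b \<gamma>) \<le> renyi b \<infinity> \<mu> Q"
    using E Egamma_Bball_ge[OF \<mu>, of \<gamma>] \<gamma> by (intro M.renyi_infinity_ge[OF base \<gamma>]) auto
qed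

text \<open>The optimiser for D_\<infinity>^{-\<epsilon>}: clip the density dP/dQ at g.\<close>

lemma clipped_in_Bball:
  assumes g: "g > 0" and E: "Egamma g P Q \<le> \<epsilon>"
  shows "\<exists>\<mu>\<in>Bball \<epsilon> P Q. renyi b \<infinity> \<mu> Q \<le> ereal (log b g)"
proof
  define f where "f = (\<lambda>x. min (p x) (ennreal g))"
  have f[measurable]: "f \<in> borel_measurable Q"
    unfolding f_def by measurable
  have "measure P A - measure (density Q f) A \<le> \<epsilon>" if A: "A \<in> sets Q" for A
  proof -
    have "measure P A = measure P (A \<inter> PQ.above g) + measure P (A - PQ.above g)"
      using P.finite_measure_Diff'[of A "PQ.above g"] A sets_P by simp
    moreover have "measure P (A \<inter> PQ.above g) - g * measure Q (A \<inter> PQ.above g) \<le> Egamma g P Q"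
      by (rule Egamma_upper) (use g A in \<open>auto simp: sets_P P.finite_measure_axioms\<close>)
    ultimately show ?thesis
      using PQ.measure_density_min_dens[OF _ A, of g] g E by (simp add: f_def)
  qed
  then show \<mu>: "density Q f \<in> Bball \<epsilon> P Q"
    by (intro density_in_Bball[OF f]) (simp_all add: f_def)
  interpret M: rn_density Q "density Q f" by (rule Bball_rn_density[OF \<mu>])
  have "AE x in Q. f x = M.dens x"
    unfolding M.dens_def by (rule Q.RN_deriv_unique[OF f refl])
  then have "AE x in Q. M.dens x \<le> ennreal g"
    by eventually_elim (metis f_def min.cobounded2)
  then show "renyi b \<infinity> (density Q f) Q \<le> ereal (log b g)"
    by (rule M.renyi_infinity_le[OF base g])
qed

lemma Egamma_gt_right_open:
  assumes g: "0 < g" and c: "c < Egamma g P Q"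
  shows "\<exists>g'>g. c < Egamma g' P Q"
proof (intro exI conjI)
  define d where "d = (Egamma g P Q - c) / 2"
  have "Egamma g P Q \<le> Egamma (g + d) P Q + d"
    using Egamma_le_shift[OF P.finite_measure_axioms Q.finite_measure_axioms, of "g + d" g] g c
    by (simp add: d_def Q.prob_space)
  then show "c < Egamma (g + d) P Q"
    using c unfolding d_def by argo
  show "g < g + d"
    using c by (simp add: d_def)
qed

lemma renyi_minus_infinity_le_iff:
  assumes g: "g > 0"
  shows "renyi_minus b \<infinity> \<epsilon> P Q \<le> ereal (log b g) \<longleftrightarrow> Egamma g P Q \<le> \<epsilon>"
proof
  assume "Egamma g P Q \<le> \<epsilon>"
  then obtain \<mu> where "\<mu> \<in> Bball \<epsilon> P Q" "renyi b \<infinity> \<mu> Q \<le> ereal (log b g)"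
    using clipped_in_Bball[OF g] by blast
  then show "renyi_minus b \<infinity> \<epsilon> P Q \<le> ereal (log b g)"
    unfolding renyi_minus_def by (rule INF_lower2)
next
  assume le: "renyi_minus b \<infinity> \<epsilon> P Q \<le> ereal (log b g)"
  show "Egamma g P Q \<le> \<epsilon>"
  proof (rule ccontr)
    assume "\<not> Egamma g P Q \<le> \<epsilon>"
    then obtain g' where "g < g'" "Egamma g' P Q > \<epsilon>"
      using Egamma_gt_right_open[OF g] by (auto simp: not_le)
    then have "ereal (log b g') \<le> ereal (log b g)"
      using renyi_minus_infinity_ge[of g'] le \<open>g < g'\<close> g by (meson order_trans less_trans)
    then show False
      using \<open>g < g'\<close> g base by simp
  qed
qed

lemma Egamma_ge_one_minus: "g \<ge> 0 \<Longrightarrow> 1 - g \<le> Egamma g P Q"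
  using Egamma_upper[OF P.finite_measure_axioms sets.top, of g Q] space_P P.prob_space Q.prob_space
  by simp

lemma Egamma_sublevel_Inf_mem:
  defines "G \<equiv> {g. g > 0 \<and> Egamma g P Q \<le> \<epsilon>}"
  shows "Inf G \<in> G"
proof -
  have "G \<noteq> {}"
    using PQ.Egamma_vanishes[OF eps(1)] by (auto simp: G_def)
  have bdd: "bdd_below G"
    by (rule bdd_belowI[of _ 0]) (simp add: G_def)
  have "1 - \<epsilon> \<le> g" if "g \<in> G" for g
    using that Egamma_ge_one_minus[of g] by (simp add: G_def)
  then have "1 - \<epsilon> \<le> Inf G"
    using \<open>G \<noteq> {}\<close> by (intro cInf_greatest)
  then have pos: "Inf G > 0"
    using eps by simp
  have "Egamma (Inf G) P Q \<le> \<epsilon>"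
  proof (rule field_le_epsilon)
    fix e :: real assume "e > 0"
    then obtain g where g: "g \<in> G" "g < Inf G + e"
      using cInf_lessD[OF \<open>G \<noteq> {}\<close>, of "Inf G + e"] by auto
    moreover have "Inf G \<le> g"
      using g(1) bdd by (rule cInf_lower)
    ultimately show "Egamma (Inf G) P Q \<le> \<epsilon> + e"
      using Egamma_le_shift[OF P.finite_measure_axioms Q.finite_measure_axioms, of g "Inf G"] pos
      by (simp add: G_def Q.prob_space)
  qed
  with pos show ?thesis
    by (simp add: G_def)
qed

lemma renyi_minus_infinity_eq:
  "renyi_minus b \<infinity> \<epsilon> P Q = ereal (log b (Inf {g. g > 0 \<and> Egamma g P Q \<le> \<epsilon>}))"
proof -
  define G where "G = {g. g > 0 \<and> Egamma g P Q \<le> \<epsilon>}"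
  have g0: "Inf G > 0" "Egamma (Inf G) P Q \<le> \<epsilon>"
    using Egamma_sublevel_Inf_mem by (simp_all add: G_def)
  then have le: "renyi_minus b \<infinity> \<epsilon> P Q \<le> ereal (log b (Inf G))"
    using renyi_minus_infinity_le_iff by simp
  have "ereal (log b (Inf G)) \<le> renyi_minus b \<infinity> \<epsilon> P Q"
  proof (rule ccontr)
    assume "\<not> ?thesis"
    then have "renyi_minus b \<infinity> \<epsilon> P Q < ereal (log b (Inf G))"
      by (simp add: not_le)
    then obtain z where z: "renyi_minus b \<infinity> \<epsilon> P Q < ereal z" "ereal z < ereal (log b (Inf G))"
      by (meson ereal_dense2)
    have "renyi_minus b \<infinity> \<epsilon> P Q \<le> ereal (log b (b powr z))"
      using z(1) base by simp
    then have "b powr z \<in> G"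
      using renyi_minus_infinity_le_iff[of "b powr z"] base by (simp add: G_def)
    then have "Inf G \<le> b powr z"
      by (rule cInf_lower) (auto simp: G_def intro: bdd_belowI[of _ 0])
    then have "log b (Inf G) \<le> log b (b powr z)"
      using log_le_cancel_iff[of b "Inf G" "b powr z"] g0 base by simp
    then show False
      using z(2) base by simp
  qed
  with le show ?thesis
    by (simp add: G_def)
qed

subsection \<open>D_0^{+\<epsilon>} and hypothesis testing\<close>

lemma restriction_in_Bball:
  assumes A[measurable]: "A \<in> sets Q" and PA: "1 - \<epsilon> \<le> measure P A"
  shows "density Q (\<lambda>x. p x * indicator A x) \<in> Bball \<epsilon> P Q"
proof (rule density_in_Bball)
  fix B assume B[measurable]: "B \<in> sets Q"
  have "emeasure (density Q (\<lambda>x. p x * indicator A x)) B = (\<integral>\<^sup>+ x. p x * indicator (B \<inter> A) x \<partial>Q)"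
    by (simp add: emeasure_density, intro nn_integral_cong) (simp split: split_indicator)
  then have "measure (density Q (\<lambda>x. p x * indicator A x)) B = measure P (B \<inter> A)"
    by (simp add: PQ.emeasure_mu[symmetric] measure_def)
  moreover have "measure P B = measure P (B \<inter> A) + measure P (B - A)"
    using P.finite_measure_Diff'[of B A] B sets_P by (simp add: Int_commute)
  moreover have "measure P (B - A) \<le> measure P (space P - A)"
    using sets.sets_into_space[OF B] B sets_P space_P by (intro P.finite_measure_mono) auto
  moreover have "measure P (space P - A) = 1 - measure P A"
    using P.prob_compl[of A] sets_P by simp
  ultimately show "measure P B - measure (density Q (\<lambda>x. p x * indicator A x)) B \<le> \<epsilon>"
    using PA by simp
qed (auto split: split_indicator)

lemma elog_inverse_le_renyi_plus_0:
  assumes A[measurable]: "A \<in> sets Q" and PA: "1 - \<epsilon> \<le> measure P A"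
  shows "elog b (1 / emeasure Q A) \<le> renyi_plus b 0 \<epsilon> P Q"
proof -
  define f where "f = (\<lambda>x. p x * indicator A x)"
  have \<mu>: "density Q f \<in> Bball \<epsilon> P Q"
    unfolding f_def by (rule restriction_in_Bball[OF A PA])
  interpret M: rn_density Q "density Q f" by (rule Bball_rn_density[OF \<mu>])
  have "AE x in Q. f x = M.dens x"
    unfolding M.dens_def by (rule Q.RN_deriv_unique) (simp_all add: f_def)
  then have "AE x in Q. x \<in> {x \<in> space Q. M.dens x \<noteq> 0} \<longrightarrow> x \<in> A"
  proof eventually_elim
    case (elim x)
    show ?case
    proof
      assume "x \<in> {x \<in> space Q. M.dens x \<noteq> 0}"
      then have "f x \<noteq> 0"
        using elim by simp
      then show "x \<in> A"
        by (simp add: f_def split: split_indicator_asm)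
    qed
  qed
  then have "emeasure Q {x \<in> space Q. M.dens x \<noteq> 0} \<le> emeasure Q A"
    by (rule emeasure_mono_AE) simp
  then have "elog b (1 / emeasure Q A) \<le> renyi b 0 (density Q f) Q"
    unfolding M.renyi_0_eq_support by (intro elog_mono[OF base] ennreal_one_divide_antimono)
  also have "\<dots> \<le> renyi_plus b 0 \<epsilon> P Q"
    unfolding renyi_plus_def by (rule SUP_upper[OF \<mu>])
  finally show ?thesis .
qed

lemma renyi_plus_0_ge_of_dens_ge:
  assumes A[measurable]: "A \<in> sets Q" and PA: "1 - \<epsilon> \<le> measure P A"
    and ge: "\<And>x. x \<in> A \<Longrightarrow> ennreal (b powr \<tau>) \<le> p x"
  shows "ereal (\<tau> + log b (1 / measure P A)) \<le> renyi_plus b 0 \<epsilon> P Q"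
proof -
  have PA0: "measure P A > 0"
    using PA eps by simp
  have QA: "b powr \<tau> * measure Q A \<le> measure P A"
    by (rule PQ.measure_ge_of_dens_ge[OF A _ ge]) auto
  have "ereal (\<tau> + log b (1 / measure P A)) \<le> elog b (1 / emeasure Q A)"
  proof (cases "measure Q A = 0")
    case False
    then have QA0: "measure Q A > 0"
      by (simp add: zero_less_measure_iff)
    have "log b (b powr \<tau> * measure Q A) \<le> log b (measure P A)"
      using QA QA0 base PA0 by simp
    then have "\<tau> + log b (1 / measure P A) \<le> log b (1 / measure Q A)"
      using QA0 PA0 base by (simp add: log_mult log_divide)
    then show ?thesis
      using QA0 by (simp add: Q.emeasure_eq_measure elog_one_div_ennreal)
  qed (simp add: Q.emeasure_eq_measure elog_def)
  also have "\<dots> \<le> renyi_plus b 0 \<epsilon> P Q"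
    by (rule elog_inverse_le_renyi_plus_0[OF A PA])
  finally show ?thesis .
qed

lemma beta_NP_le:
  assumes "A \<in> sets P" "1 - \<epsilon> \<le> measure P A"
  shows "beta_NP (1 - \<epsilon>) P Q \<le> measure Q A"
  unfolding beta_NP_def using assms by (intro cInf_lower bdd_belowI[of _ 0]) auto

lemma beta_NP_greatest:
  assumes "\<And>A. A \<in> sets P \<Longrightarrow> 1 - \<epsilon> \<le> measure P A \<Longrightarrow> c \<le> measure Q A"
  shows "c \<le> beta_NP (1 - \<epsilon>) P Q"
proof -
  have "space P \<in> sets P \<and> 1 - \<epsilon> \<le> measure P (space P)"
    using eps P.prob_space by simp
  then show ?thesis
    unfolding beta_NP_def using assms by (intro cInf_greatest) blast+
qed

lemma renyi_plus_0_le_beta: "renyi_plus b 0 \<epsilon> P Q \<le> - elog b (ennreal (beta_NP (1 - \<epsilon>) P Q))"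
  unfolding renyi_plus_def
proof (rule SUP_least)
  fix \<mu> assume \<mu>: "\<mu> \<in> Bball \<epsilon> P Q"
  interpret M: rn_density Q \<mu> by (rule Bball_rn_density[OF \<mu>])
  define T where "T = {x \<in> space Q. M.dens x \<noteq> 0}"
  have T[measurable]: "T \<in> sets Q"
    unfolding T_def by measurable
  have "measure \<mu> (space Q - T) \<le> 0 * measure Q (space Q - T)"
    by (rule M.measure_le_of_dens_le) (auto simp: T_def)
  moreover have "measure P (space Q - T) - measure \<mu> (space Q - T) \<le> \<epsilon>"
    by (rule Bball_measure_diff_le[OF \<mu>]) auto
  moreover have "measure P (space Q - T) = 1 - measure P T"
    using P.prob_compl[of T] space_P sets_P by simp
  ultimately have "1 - \<epsilon> \<le> measure P T"
    by simp
  then have \<beta>: "beta_NP (1 - \<epsilon>) P Q \<le> measure Q T"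
    using sets_P by (intro beta_NP_le) auto
  show "renyi b 0 \<mu> Q \<le> - elog b (ennreal (beta_NP (1 - \<epsilon>) P Q))"
  proof (cases "beta_NP (1 - \<epsilon>) P Q > 0")
    case True
    then have "measure Q T > 0"
      using \<beta> by simp
    then have "renyi b 0 \<mu> Q = ereal (log b (1 / measure Q T))"
      by (simp add: M.renyi_0_eq_support T_def[symmetric] Q.emeasure_eq_measure elog_one_div_ennreal)
    also have "log b (1 / measure Q T) \<le> - log b (beta_NP (1 - \<epsilon>) P Q)"
      using True \<beta> base by (simp add: log_divide)
    finally show ?thesis
      using True by (simp add: elog_ennreal)
  qed (simp add: elog_ennreal_nonpos)
qed

lemma renyi_plus_0_ge_beta: "- elog b (ennreal (beta_NP (1 - \<epsilon>) P Q)) \<le> renyi_plus b 0 \<epsilon> P Q"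
proof (rule ccontr)
  assume "\<not> ?thesis"
  then have "renyi_plus b 0 \<epsilon> P Q < - elog b (ennreal (beta_NP (1 - \<epsilon>) P Q))"
    by (simp add: not_le)
  then obtain z where z: "renyi_plus b 0 \<epsilon> P Q < ereal z" "ereal z < - elog b (ennreal (beta_NP (1 - \<epsilon>) P Q))"
    by (meson ereal_dense2)
  have "b powr (- z) \<le> measure Q A" if A: "A \<in> sets P" "1 - \<epsilon> \<le> measure P A" for A
  proof -
    have lt: "elog b (1 / emeasure Q A) < ereal z"
      using elog_inverse_le_renyi_plus_0[of A] A z(1) sets_P by (auto intro: order.strict_trans1)
    then have QA: "measure Q A > 0"
      by (cases "measure Q A = 0") (auto simp: Q.emeasure_eq_measure elog_def zero_less_measure_iff)
    then have "log b (1 / measure Q A) < z"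
      using lt by (simp add: Q.emeasure_eq_measure elog_one_div_ennreal)
    then have "- z < log b (measure Q A)"
      using QA base by (simp add: log_divide)
    then have "b powr (- z) < b powr (log b (measure Q A))"
      using base by (rule powr_less_mono)
    then show ?thesis
      using QA base by simp
  qed
  then have \<beta>: "b powr (- z) \<le> beta_NP (1 - \<epsilon>) P Q"
    by (rule beta_NP_greatest)
  have "0 < b powr (- z)"
    using base by simp
  with \<beta> have \<beta>0: "0 < beta_NP (1 - \<epsilon>) P Q"
    by linarith
  with \<beta> \<open>0 < b powr (- z)\<close> have "log b (b powr (- z)) \<le> log b (beta_NP (1 - \<epsilon>) P Q)"
    using base by (subst log_le_cancel_iff) auto
  then have "- elog b (ennreal (beta_NP (1 - \<epsilon>) P Q)) \<le> ereal z"
    using \<beta>0 base by (simp add: elog_ennreal)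
  with z(2) show False
    by simp
qed

lemma renyi_plus_0_eq_beta: "renyi_plus b 0 \<epsilon> P Q = - elog b (ennreal (beta_NP (1 - \<epsilon>) P Q))"
  using renyi_plus_0_le_beta renyi_plus_0_ge_beta by (rule antisym)

lemma renyi_plus_0_ge_threshold:
  assumes \<tau>: "measure P {x \<in> space P. info_dens b P Q x \<le> ereal \<tau>} \<le> \<epsilon>"
  shows "ereal \<tau> \<le> renyi_plus b 0 \<epsilon> P Q"
    and "nonatomic P \<Longrightarrow> ereal (\<tau> + log b (1 / (1 - \<epsilon>))) \<le> renyi_plus b 0 \<epsilon> P Q"
proof -
  define A where "A = PQ.above (b powr \<tau>)"
  have A[measurable]: "A \<in> sets Q"
    by (simp add: A_def)
  have "{x \<in> space P. ereal \<tau> < info_dens b P Q x} = A"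
    using info_dens_superlevel_eq_above[of "b powr \<tau>"] base by (simp add: A_def)
  then have "{x \<in> space P. info_dens b P Q x \<le> ereal \<tau>} = space P - A"
    by (auto simp: not_less[symmetric])
  then have PA: "1 - \<epsilon> \<le> measure P A"
    using \<tau> P.prob_compl[of A] sets_P by simp
  have ge: "ennreal (b powr \<tau>) \<le> p x" if "x \<in> A" for x
    using that by (simp add: A_def PQ.above_def less_imp_le)
  have "0 < measure P A" "measure P A \<le> 1"
    using PA eps by simp_all
  then have "0 \<le> log b (1 / measure P A)"
    using base by simp
  then have "ereal \<tau> \<le> ereal (\<tau> + log b (1 / measure P A))"
    by simp
  also have "\<dots> \<le> renyi_plus b 0 \<epsilon> P Q"
    by (rule renyi_plus_0_ge_of_dens_ge[OF A PA ge])
  finally show "ereal \<tau> \<le> renyi_plus b 0 \<epsilon> P Q" .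
  assume "nonatomic P"
  then obtain B where B: "B \<in> sets P" "B \<subseteq> A" "measure P B = 1 - \<epsilon>"
    using P.nonatomic_intermediate_value[of A "1 - \<epsilon>"] PA eps sets_P by auto
  then have "ereal (\<tau> + log b (1 / measure P B)) \<le> renyi_plus b 0 \<epsilon> P Q"
    using ge sets_P by (intro renyi_plus_0_ge_of_dens_ge) auto
  with B(3) show "ereal (\<tau> + log b (1 / (1 - \<epsilon>))) \<le> renyi_plus b 0 \<epsilon> P Q"
    by simp
qed


end

theorem mainTheorem4:
  fixes b \<epsilon> \<gamma> :: real and \<mu> P Q :: "'a measure"
  assumes b: "b > 1"
    and P: "prob_space P" and Q: "prob_space Q"
    and sPQ: "sets P = sets Q" and smu: "sets \<mu> = sets Q"
    and fmu: "finite_measure \<mu>"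
    and acmu: "absolutely_continuous Q \<mu>" and acP: "absolutely_continuous Q P"
    and eps: "0 < \<epsilon>" "\<epsilon> < 1"
    and gam: "\<gamma> \<ge> 1"
  shows
    \<comment> \<open>(a)\<close>
    "(\<forall>a::real. a > 1 \<longrightarrow>
        Egamma \<gamma> P Q \<le> Fbar b \<gamma> P Q \<and> Fbar b \<gamma> P Q \<le> a / (a - 1) * Egamma (\<gamma> / a) P Q)
     \<comment> \<open>(b)\<close>
     \<and> relent b P Q \<le> enn2ereal (\<integral>\<^sup>+ \<tau>\<in>{0..}. ennreal (measure P {x \<in> space P. info_dens b P Q x > ereal \<tau>}) \<partial>lborel)
     \<and> relent b P Q \<ge> ereal (Egamma \<gamma> P Q * log b \<gamma> - 2 * exp (-1) * log b (exp 1))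
     \<comment> \<open>(c)\<close>
     \<and> (\<forall>\<alpha>::real. 0 \<le> \<alpha> \<and> \<alpha> < 1 \<longrightarrow>
          renyi b (ereal \<alpha>) \<mu> Q \<le> ereal (log b \<gamma>)
            - ereal (1 / (1 - \<alpha>)) * elog b (ennreal (measure \<mu> (space \<mu>) - Egamma \<gamma> \<mu> Q)))
     \<and> (\<forall>\<alpha>::real. 1 < \<alpha> \<longrightarrow>
          renyi b (ereal \<alpha>) \<mu> Q \<ge> ereal (log b \<gamma>)
            + ereal (1 / (\<alpha> - 1)) * elog b (ennreal (Egamma \<gamma> \<mu> Q)))
     \<comment> \<open>(d)\<close>
     \<and> (\<forall>\<alpha>::real. 0 \<le> \<alpha> \<and> \<alpha> < 1 \<and> Egamma \<gamma> P Q < 1 - \<epsilon> \<longrightarrow>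
          renyi_plus b (ereal \<alpha>) \<epsilon> P Q
            \<le> ereal (log b \<gamma> - 1 / (1 - \<alpha>) * log b (1 - \<epsilon> - Egamma \<gamma> P Q)))
     \<and> (\<forall>\<alpha>::real. 1 < \<alpha> \<and> Egamma \<gamma> P Q > \<epsilon> \<longrightarrow>
          renyi_minus b (ereal \<alpha>) \<epsilon> P Q
            \<ge> ereal (log b \<gamma> + 1 / (\<alpha> - 1) * log b (Egamma \<gamma> P Q - \<epsilon>)))
     \<and> (Egamma \<gamma> P Q > \<epsilon> \<longrightarrow> renyi_minus b \<infinity> \<epsilon> P Q \<ge> ereal (log b \<gamma>))
     \<comment> \<open>(e)\<close>
     \<and> (renyi_minus b \<infinity> \<epsilon> P Q \<le> ereal (log b \<gamma>) \<longleftrightarrow> Egamma \<gamma> P Q \<le> \<epsilon>)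
     \<and> renyi_minus b \<infinity> \<epsilon> P Q = ereal (log b (Inf {g. g > 0 \<and> Egamma g P Q \<le> \<epsilon>}))
     \<comment> \<open>(f)\<close>
     \<and> renyi_plus b 0 \<epsilon> P Q = - elog b (ennreal (beta_NP (1 - \<epsilon>) P Q))
     \<comment> \<open>(g)\<close>
     \<and> (\<forall>\<tau>::real. \<epsilon> \<ge> measure P {x \<in> space P. info_dens b P Q x \<le> ereal \<tau>} \<longrightarrow>
          renyi_plus b 0 \<epsilon> P Q \<ge> ereal \<tau>
          \<and> (nonatomic P \<longrightarrow> renyi_plus b 0 \<epsilon> P Q \<ge> ereal (\<tau> + log b (1 / (1 - \<epsilon>)))))"
proof -
  interpret smooth_divergence b \<epsilon> P Q
    by (rule smooth_divergence.intro[OF b P Q sPQ acP eps])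
  interpret M: rn_density Q \<mu>
    by (rule rn_density.intro[OF Q fmu smu acmu])
  have \<gamma>: "\<gamma> > 0"
    using gam by simp
  show ?thesis
    using Egamma_le_Fbar[OF \<gamma>] Fbar_le_Egamma[OF \<gamma>] relent_le_tail_integral relent_ge_Egamma[OF gam]
      M.renyi_le_Egamma[OF b \<gamma>] M.renyi_ge_Egamma[OF b \<gamma>]
      renyi_plus_le[OF \<gamma>] renyi_minus_ge[OF \<gamma>] renyi_minus_infinity_ge[OF \<gamma>]
      renyi_minus_infinity_le_iff[OF \<gamma>] renyi_minus_infinity_eq renyi_plus_0_eq_beta
      renyi_plus_0_ge_threshold
    by blast
qed

end
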